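(* Let $\Phi$ be a channel matrix whose rows $P^1,\dots,P^4\in\Delta^n$ are in general position, let $Q^0$ be the equidistant point from $P^1,\dots,P^4$ with barycentric coordinate $\boldsymbol\lambda^0$, and suppose $\lambda^0_1<0$, $\lambda^0_2,\lambda^0_3,\lambda^0_4\ge0$. Let $Q^1=\pi(Q^0|L(P^2,P^3,P^4))$ with barycentric coordinate $\boldsymbol\lambda^1$ about $P^1,\dots,P^4$, and suppose $\lambda^1_2<0$, $\lambda^1_3\ge0$, $\lambda^1_4\ge0$. Let $Q^2=\pi(Q^1|L(P^3,P^4))$. Then the output distribution achieving the channel capacity is $Q^\ast=Q^2$ and the channel capacity is $C=D(P^3\|Q^2)$.
   Context: $\Delta^n=\{Q:Q_j>0,\sum_jQ_j=1\}$, $\bar\Delta^m=\{\boldsymbol\lambda:\lambda_i\ge0,\sum_i\lambda_i=1\}$; $D(Q\|Q')=\sum_jQ_j\log(Q_j/Q'_j)$. Rows are in general position if $P^2-P^1,\dots,P^m-P^1$ are linearly independent. $L(S^1,\dots,S^r)=\{\sum_i\lambda_iS^i:\sum_i\lambda_i=1\}\cap\Delta^n$; for such an affine subspace $L$, $\pi(Q'|L)$ is the unique $Q\in L$ minimizing $D(Q\|Q')$. The barycentric coordinate of $Q\in L(P^1,\dots,P^m)$ is the unique $\boldsymbol\lambda$ with $\sum_i\lambda_i=1$, $Q=\sum_i\lambda_iP^i$. The equidistant point is the unique $Q^0\in L(P^1,\dots,P^m)$ with all $D(P^i\|Q^0)$ equal. Mutual information $I(\boldsymbol\lambda,\Phi)=\sum_{i,j}\lambda_iP^i_j\log(P^i_j/Q_j)$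 with $Q=\boldsymbol\lambda\Phi$; capacity $C=\max_{\boldsymbol\lambda\in\bar\Delta^m}I(\boldsymbol\lambda,\Phi)$; the capacity-achieving output distribution is $Q^\ast=\boldsymbol\lambda^\ast\Phi$ for a maximizer $\boldsymbol\lambda^\ast$ (unique). *)

theory Defs
  imports "HOL-Analysis.Analysis"
begin

text \<open>The channel matrix is given by its
  rows P 1, ..., P m (P :: nat => real^'n); coefficient vectors are nat => real,
  only their values on the row index set matter.\<close>

definition Delta :: "(real^'n) set" where
  "Delta = {Q. (\<forall>j. Q $ j > 0) \<and> (\<Sum>j\<in>UNIV. Q $ j) = 1}"

definition barDelta :: "nat \<Rightarrow> (nat \<Rightarrow> real) set" where
  "barDelta m = {lam. (\<forall>i\<in>{1..m}. lam i \<ge> 0) \<and> (\<Sum>i\<in>{1..m}. lam i) = 1}"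

definition KL :: "real^'n \<Rightarrow> real^'n \<Rightarrow> real" where
  "KL Q Q' = (\<Sum>j\<in>UNIV. Q $ j * ln (Q $ j / Q' $ j))"

definition general_position :: "(nat \<Rightarrow> real^'n) \<Rightarrow> nat \<Rightarrow> bool" where
  "general_position P m \<longleftrightarrow>
     (\<forall>c. (\<Sum>i\<in>{2..m}. c i *\<^sub>R (P i - P 1)) = 0 \<longrightarrow> (\<forall>i\<in>{2..m}. c i = 0))"

definition affL :: "(nat \<Rightarrow> real^'n) \<Rightarrow> nat set \<Rightarrow> (real^'n) set" where
  "affL S I = {Q. \<exists>lam. (\<Sum>i\<in>I. lam i) = 1 \<and> Q = (\<Sum>i\<in>I. lam i *\<^sub>R S i)} \<inter> Delta"

definition is_Iproj :: "(real^'n) set \<Rightarrow> real^'n \<Rightarrow> real^'n \<Rightarrow> bool" where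
  "is_Iproj L Q' Q \<longleftrightarrow> Q \<in> L \<and> (\<forall>R\<in>L. KL Q Q' \<le> KL R Q')"

definition is_bary :: "(nat \<Rightarrow> real^'n) \<Rightarrow> nat \<Rightarrow> real^'n \<Rightarrow> (nat \<Rightarrow> real) \<Rightarrow> bool" where
  "is_bary P m Q lam \<longleftrightarrow> (\<Sum>i\<in>{1..m}. lam i) = 1 \<and> Q = (\<Sum>i\<in>{1..m}. lam i *\<^sub>R P i)"

definition is_equidistant :: "(nat \<Rightarrow> real^'n) \<Rightarrow> nat \<Rightarrow> real^'n \<Rightarrow> bool" where
  "is_equidistant P m Q \<longleftrightarrow> Q \<in> affL P {1..m} \<and>
     (\<forall>i\<in>{1..m}. \<forall>k\<in>{1..m}. KL (P i) Q = KL (P k) Q)"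

definition out_dist :: "(nat \<Rightarrow> real^'n) \<Rightarrow> nat \<Rightarrow> (nat \<Rightarrow> real) \<Rightarrow> real^'n" where
  "out_dist P m lam = (\<Sum>i\<in>{1..m}. lam i *\<^sub>R P i)"

definition mutual_info :: "(nat \<Rightarrow> real^'n) \<Rightarrow> nat \<Rightarrow> (nat \<Rightarrow> real) \<Rightarrow> real" where
  "mutual_info P m lam =
     (\<Sum>i\<in>{1..m}. \<Sum>j\<in>UNIV. lam i * P i $ j * ln (P i $ j / out_dist P m lam $ j))"

definition capacity :: "(nat \<Rightarrow> real^'n) \<Rightarrow> nat \<Rightarrow> real" where
  "capacity P m = (SUP lam\<in>barDelta m. mutual_info P m lam)"

end

theory Submission
  imports Defs
begin

text \<open>Write D_i(Q) for D(P^i || Q). The two I-projections give the Pythagorean identities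
  D_i(Q^0) = D_i(Q^1) + D(Q^1 || Q^0) for i = 2, 3, 4 and D_i(Q^1) = D_i(Q^2) + D(Q^2 || Q^1) for
  i = 3, 4; with the equidistance of Q^0 this yields D_3(Q^2) = D_4(Q^2). For every affine combination
  Q' = sum_i w_i P^i the gains D_i(Q') - D_i(Q) average, with the weights w_i, to -D(Q' || Q) <= 0.
  Applied to Q^1 (negative weight on P^2) and then to Q^0 (negative weight on P^1), this shows that
  P^2 and P^1 gain at least as much as P^3 and P^4, i.e. D_i(Q^2) <= D_3(Q^2) for every i.
  By strict convexity Q^2 lies on the segment [P^3, P^4], so these are the Kuhn-Tucker conditions of
  the capacity problem: I(lambda) <= D_3(Q^2) - D(lambda Phi || Q^2) for every input lambda, with
  equality for the input supported on {3, 4} whose output is Q^2.\<close>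

definition log_ratio :: "real^'n \<Rightarrow> real^'n \<Rightarrow> real^'n" where
  "log_ratio A B = (\<chi> j. ln (A $ j / B $ j))"

lemma Delta_pos: "A \<in> Delta \<Longrightarrow> 0 < A $ j"
  by (simp add: Delta_def)

lemma Delta_sum: "A \<in> Delta \<Longrightarrow> (\<Sum>j\<in>UNIV. A $ j) = 1"
  by (simp add: Delta_def)

lemma KL_eq_inner_log_ratio: "KL A B = A \<bullet> log_ratio A B"
  by (simp add: KL_def log_ratio_def inner_vec_def)

lemma KL_chain:
  assumes "A \<in> Delta" "B \<in> Delta" "C \<in> Delta"
  shows "KL A C = KL A B + A \<bullet> log_ratio B C"
proof -
  have "ln (A $ j / C $ j) = ln (A $ j / B $ j) + ln (B $ j / C $ j)" for j
    using Delta_pos[OF assms(1), of j] Delta_pos[OF assms(2), of j] Delta_pos[OF assms(3), of j]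
    by (simp add: ln_div)
  then show ?thesis
    by (simp add: KL_def log_ratio_def inner_vec_def distrib_left sum.distrib)
qed

lemma inner_log_ratio_swap:
  assumes "A \<in> Delta" "B \<in> Delta"
  shows "A \<bullet> log_ratio B A = - KL A B"
proof -
  have "ln (B $ j / A $ j) = - ln (A $ j / B $ j)" for j
    using Delta_pos[OF assms(1), of j] Delta_pos[OF assms(2), of j] by (simp add: ln_div)
  then show ?thesis
    by (simp add: KL_def log_ratio_def inner_vec_def sum_negf)
qed

lemma KL_self: "A \<in> Delta \<Longrightarrow> KL A A = 0"
  using Delta_pos[of A] by (simp add: KL_def less_imp_neq[symmetric])

lemma diff_le_mult_ln_div:
  fixes x y :: real
  assumes "0 < x" "0 < y"
  shows "x - y \<le> x * ln (x / y)"
proof -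
  have "ln (y / x) \<le> y / x - 1"
    using assms by (intro ln_le_minus_one) simp
  then have "x * (1 - y / x) \<le> x * ln (x / y)"
    using assms by (intro mult_left_mono) (auto simp: ln_div)
  moreover have "x * (1 - y / x) = x - y"
    using assms by (simp add: field_simps)
  ultimately show ?thesis
    by simp
qed

lemma KL_nonneg:
  assumes "A \<in> Delta" "B \<in> Delta"
  shows "0 \<le> KL A B"
proof -
  have "(\<Sum>j\<in>UNIV. A $ j - B $ j) \<le> KL A B"
    unfolding KL_def using Delta_pos[OF assms(1)] Delta_pos[OF assms(2)]
    by (intro sum_mono diff_le_mult_ln_div)
  then show ?thesis
    using Delta_sum[OF assms(1)] Delta_sum[OF assms(2)] by (simp add: sum_subtractf)
qed

lemma KL_eq_0_iff:
  assumes "A \<in> Delta" "B \<in> Delta"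
  shows "KL A B = 0 \<longleftrightarrow> A = B"
proof
  assume KL0: "KL A B = 0"
  let ?slack = "\<lambda>j. A $ j * ln (A $ j / B $ j) - (A $ j - B $ j)"
  have pos: "0 < A $ j" "0 < B $ j" for j
    using Delta_pos assms by auto
  have "sum ?slack UNIV = 0"
    using KL0 Delta_sum[OF assms(1)] Delta_sum[OF assms(2)] by (simp add: KL_def sum_subtractf)
  moreover have "\<forall>j\<in>UNIV. 0 \<le> ?slack j"
    using diff_le_mult_ln_div[OF pos] by simp
  ultimately have slack0: "?slack j = 0" for j
    using sum_nonneg_eq_0_iff[of UNIV ?slack] by simp
  have "A $ j = B $ j" for j
  proof -
    have "A $ j * ln (B $ j / A $ j) = B $ j - A $ j"
      using slack0[of j] pos[of j] by (simp add: ln_div algebra_simps)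
    then have "ln (B $ j / A $ j) = B $ j / A $ j - 1"
      using pos[of j] by (simp add: field_simps)
    then have "B $ j / A $ j = 1"
      using pos[of j] by (intro ln_eq_minus_one) auto
    then show ?thesis
      using pos[of j] by simp
  qed
  then show "A = B"
    by (simp add: vec_eq_iff)
qed (simp add: KL_self assms)

lemma sum_weighted_KL_diff:
  assumes "finite I" "\<forall>i\<in>I. X i \<in> Delta" "Q \<in> Delta" "Q' \<in> Delta"
    and "Q' = (\<Sum>i\<in>I. w i *\<^sub>R X i)"
  shows "(\<Sum>i\<in>I. w i * (KL (X i) Q' - KL (X i) Q)) = - KL Q' Q"
proof -
  have "(\<Sum>i\<in>I. w i * (KL (X i) Q' - KL (X i) Q)) = (\<Sum>i\<in>I. w i * (X i \<bullet> log_ratio Q Q'))"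
    using assms(2-4) KL_chain[of "X _" Q Q'] by (intro sum.cong refl) simp
  also have "\<dots> = Q' \<bullet> log_ratio Q Q'"
    by (simp add: assms(5) inner_sum_left)
  finally show ?thesis
    using inner_log_ratio_swap[OF assms(4,3)] by simp
qed

lemma mult_ln_div_line_has_derivative:
  fixes q c d :: real
  assumes "0 < q" "0 < c"
  shows "((\<lambda>t. (q + t * d) * ln ((q + t * d) / c)) has_real_derivative d * ln (q / c) + d) (at 0)"
  using assms by (auto intro!: derivative_eq_intros simp: field_simps)

lemma KL_line_has_derivative:
  assumes "Q \<in> Delta" "Q' \<in> Delta"
  shows "((\<lambda>t. KL (Q + t *\<^sub>R (R - Q)) Q') has_real_derivative
           (R - Q) \<bullet> log_ratio Q Q' + (\<Sum>j\<in>UNIV. R $ j - Q $ j)) (at 0)"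
proof -
  let ?d = "\<lambda>j. R $ j - Q $ j"
  have "((\<lambda>t. (Q $ j + t * ?d j) * ln ((Q $ j + t * ?d j) / Q' $ j))
          has_real_derivative ?d j * ln (Q $ j / Q' $ j) + ?d j) (at 0)" for j
    using Delta_pos assms by (intro mult_ln_div_line_has_derivative)
  then have deriv: "((\<lambda>t. \<Sum>j\<in>UNIV. (Q $ j + t * ?d j) * ln ((Q $ j + t * ?d j) / Q' $ j))
      has_real_derivative (\<Sum>j\<in>UNIV. ?d j * ln (Q $ j / Q' $ j) + ?d j)) (at 0)"
    by (rule DERIV_sum)
  have KL_line: "(\<lambda>t. KL (Q + t *\<^sub>R (R - Q)) Q') =
      (\<lambda>t. \<Sum>j\<in>UNIV. (Q $ j + t * ?d j) * ln ((Q $ j + t * ?d j) / Q' $ j))"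
    by (simp add: KL_def)
  have D: "(R - Q) \<bullet> log_ratio Q Q' + sum ?d UNIV = (\<Sum>j\<in>UNIV. ?d j * ln (Q $ j / Q' $ j) + ?d j)"
    by (simp add: log_ratio_def inner_vec_def sum.distrib)
  show ?thesis
    unfolding KL_line D by (rule deriv)
qed

lemma eventually_line_in_Delta:
  assumes "Q \<in> Delta" "(\<Sum>j\<in>UNIV. R $ j) = 1"
  shows "eventually (\<lambda>t. Q + t *\<^sub>R (R - Q) \<in> Delta) (at 0)"
proof -
  have "eventually (\<lambda>t. \<forall>j. 0 < Q $ j + t * (R $ j - Q $ j)) (at (0::real))"
  proof (intro eventually_all_finite)
    fix j
    have "((\<lambda>t. Q $ j + t * (R $ j - Q $ j)) \<longlongrightarrow> Q $ j) (at (0::real))"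
      by (auto intro!: tendsto_eq_intros)
    then show "eventually (\<lambda>t. 0 < Q $ j + t * (R $ j - Q $ j)) (at 0)"
      using Delta_pos[OF assms(1)] by (auto dest: order_tendstoD(1))
  qed
  moreover have "(\<Sum>j\<in>UNIV. (Q + t *\<^sub>R (R - Q)) $ j) = 1" for t
    using assms by (simp add: Delta_sum sum.distrib sum_distrib_left[symmetric] sum_subtractf)
  ultimately show ?thesis
    unfolding Delta_def by (simp add: eventually_mono)
qed

lemma KL_line_min_first_order:
  assumes Q: "Q \<in> Delta" and Q': "Q' \<in> Delta" and R: "R \<in> Delta"
    and min: "\<And>t. Q + t *\<^sub>R (R - Q) \<in> Delta \<Longrightarrow> KL Q Q' \<le> KL (Q + t *\<^sub>R (R - Q)) Q'"
  shows "R \<bullet> log_ratio Q Q' = KL Q Q'"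
proof -
  let ?D = "(R - Q) \<bullet> log_ratio Q Q' + (\<Sum>j\<in>UNIV. R $ j - Q $ j)"
  have deriv: "((\<lambda>t. KL (Q + t *\<^sub>R (R - Q)) Q') has_derivative (\<lambda>h. ?D * h)) (at 0)"
    using KL_line_has_derivative[OF Q Q'] by (simp add: has_field_derivative_def)
  have "eventually (\<lambda>t. KL (Q + 0 *\<^sub>R (R - Q)) Q' \<le> KL (Q + t *\<^sub>R (R - Q)) Q') (at 0)"
    using eventually_line_in_Delta[OF Q Delta_sum[OF R]] by (rule eventually_mono) (simp add: min)
  then have "?D = 0"
    using fun_cong[OF has_derivative_local_min[OF deriv], of 1] by simp
  moreover have "(\<Sum>j\<in>UNIV. R $ j - Q $ j) = 0"
    using Delta_sum[OF Q] Delta_sum[OF R] by (simp add: sum_subtractf)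
  ultimately show ?thesis
    by (simp add: inner_diff_left KL_eq_inner_log_ratio)
qed

lemma affL_line_closed:
  assumes Q: "Q \<in> affL P I" and I: "finite I" "k \<in> I" and R: "Q + t *\<^sub>R (P k - Q) \<in> Delta"
  shows "Q + t *\<^sub>R (P k - Q) \<in> affL P I"
proof -
  obtain a where a: "sum a I = 1" "Q = (\<Sum>i\<in>I. a i *\<^sub>R P i)"
    using Q by (auto simp: affL_def)
  define b where "b i = (1 - t) * a i + (if i = k then t else 0)" for i
  have "sum b I = 1"
    using a(1) I by (simp add: b_def sum.distrib sum_distrib_left[symmetric])
  moreover have "(\<Sum>i\<in>I. b i *\<^sub>R P i) = (1 - t) *\<^sub>R Q + t *\<^sub>R P k"
    using a(2) I
    by (simp add: b_def scaleR_add_left sum.distrib scaleR_sum_right if_distrib[of "\<lambda>c. c *\<^sub>R _"]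
        sum.delta cong: if_cong)
  moreover have "(1 - t) *\<^sub>R Q + t *\<^sub>R P k = Q + t *\<^sub>R (P k - Q)"
    by (simp add: algebra_simps)
  ultimately show ?thesis
    using R unfolding affL_def by (metis (mono_tags, lifting) IntI mem_Collect_eq)
qed

lemma Iproj_pythagorean:
  assumes proj: "is_Iproj (affL P I) Q' Q" and Q': "Q' \<in> Delta"
    and I: "finite I" "k \<in> I" and Pk: "P k \<in> Delta"
  shows "KL (P k) Q' = KL (P k) Q + KL Q Q'"
proof -
  have QL: "Q \<in> affL P I" and min: "\<forall>R\<in>affL P I. KL Q Q' \<le> KL R Q'"
    using proj by (auto simp: is_Iproj_def)
  have Q: "Q \<in> Delta"
    using QL by (simp add: affL_def)
  have "P k \<bullet> log_ratio Q Q' = KL Q Q'"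
    using min affL_line_closed[OF QL I] by (intro KL_line_min_first_order[OF Q Q' Pk]) blast
  then show ?thesis
    using KL_chain[OF Pk Q Q'] by simp
qed

lemma mult_ln_div_convex_comb_le:
  fixes x y q a :: real
  assumes "0 < x" "0 < y" "0 < q" "0 \<le> a" "a \<le> 1" "x = a * y + (1 - a) * q"
  shows "x * ln (x / q) \<le> a * (y * ln (y / q))"
proof -
  have flip: "u * ln (x / u) \<le> x - u" if "0 < u" for u
    using diff_le_mult_ln_div[OF that assms(1)] that assms(1) by (simp add: ln_div algebra_simps)
  define L L1 L2 where "L = ln (x / q)" and "L1 = ln (x / y)" and "L2 = ln (y / q)"
  have "L = L1 + L2"
    using assms(1-3) by (simp add: L_def L1_def L2_def ln_div)
  then have "x * L - a * (y * L2) = a * (y * L1) + (1 - a) * (q * L)"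
    unfolding assms(6) by (simp add: algebra_simps)
  then have "x * ln (x / q) - a * (y * ln (y / q)) = a * (y * ln (x / y)) + (1 - a) * (q * ln (x / q))"
    by (simp add: L_def L1_def L2_def)
  also have "\<dots> \<le> a * (x - y) + (1 - a) * (x - q)"
    using flip assms by (intro add_mono mult_left_mono) auto
  also have "\<dots> = 0"
    using assms(6) by (simp add: algebra_simps)
  finally show ?thesis
    by simp
qed

lemma KL_convex_comb_le:
  assumes X: "X \<in> Delta" and Q: "Q \<in> Delta" and Y: "Y \<in> Delta"
    and Y_eq: "Y = a *\<^sub>R X + (1 - a) *\<^sub>R Q" and a: "0 \<le> a" "a \<le> 1"
  shows "KL Y Q \<le> a * KL X Q"
proof -
  have "KL Y Q \<le> (\<Sum>j\<in>UNIV. a * (X $ j * ln (X $ j / Q $ j)))"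
    unfolding KL_def using Delta_pos[OF X] Delta_pos[OF Q] Delta_pos[OF Y] a
    by (intro sum_mono mult_ln_div_convex_comb_le) (auto simp: Y_eq)
  then show ?thesis
    by (simp add: KL_def sum_distrib_left)
qed

text \<open>If c < 0 then Y lies strictly between X and Q, and convexity makes Y strictly closer to Q than X.\<close>
lemma coeff_nonneg_of_KL_le:
  assumes X: "X \<in> Delta" and Y: "Y \<in> Delta" and Q: "Q \<in> Delta" and "X \<noteq> Y"
    and Q_eq: "Q = c *\<^sub>R X + (1 - c) *\<^sub>R Y" and le: "KL X Q \<le> KL Y Q"
  shows "0 \<le> c"
proof (rule ccontr)
  assume "\<not> 0 \<le> c"
  define a where "a = - c / (1 - c)"
  have a: "0 \<le> a" "a < 1"
    using \<open>\<not> 0 \<le> c\<close> by (auto simp: a_def field_simps)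
  have "a + (1 - a) * c = 0" "(1 - a) * (1 - c) = 1"
    using \<open>\<not> 0 \<le> c\<close> by (simp_all add: a_def field_simps)
  moreover have "a *\<^sub>R X + (1 - a) *\<^sub>R Q = (a + (1 - a) * c) *\<^sub>R X + ((1 - a) * (1 - c)) *\<^sub>R Y"
    unfolding Q_eq by (simp add: algebra_simps)
  ultimately have "Y = a *\<^sub>R X + (1 - a) *\<^sub>R Q"
    by simp
  then have KL_Y: "KL Y Q \<le> a * KL X Q"
    using KL_convex_comb_le[OF X Q Y] a by simp
  have "X \<noteq> Q"
  proof
    assume "X = Q"
    have "(1 - c) *\<^sub>R (Y - X) = (c *\<^sub>R X + (1 - c) *\<^sub>R Y) - X"
      by (simp add: algebra_simps)
    also have "\<dots> = 0"
      using \<open>X = Q\<close> Q_eq by simp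
    finally show False
      using \<open>\<not> 0 \<le> c\<close> \<open>X \<noteq> Y\<close> by auto
  qed
  then have "0 < KL X Q"
    using KL_nonneg[OF X Q] KL_eq_0_iff[OF X Q] by linarith
  then show False
    using le KL_Y a by (smt (verit) mult_less_cancel_right2)
qed

lemma out_dist_in_Delta:
  assumes rows: "\<forall>i\<in>{1..m}. P i \<in> Delta" and lam: "lam \<in> barDelta m"
  shows "out_dist P m lam \<in> Delta"
proof -
  have lam_nonneg: "\<forall>i\<in>{1..m}. 0 \<le> lam i" and lam_sum: "(\<Sum>i\<in>{1..m}. lam i) = 1"
    using lam by (auto simp: barDelta_def)
  have "\<exists>k\<in>{1..m}. 0 < lam k"
  proof (rule ccontr)
    assume "\<not> (\<exists>k\<in>{1..m}. 0 < lam k)"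
    then have "(\<Sum>i\<in>{1..m}. lam i) \<le> 0"
      by (intro sum_nonpos) (simp add: not_less)
    then show False
      using lam_sum by simp
  qed
  then obtain k where k: "k \<in> {1..m}" "0 < lam k" ..
  have "0 < out_dist P m lam $ j" for j
  proof -
    have "0 < (\<Sum>i\<in>{1..m}. lam i * P i $ j)"
    proof (rule sum_pos2[OF _ k(1)])
      show "0 < lam k * P k $ j"
        using k rows Delta_pos[of "P k" j] by simp
      show "0 \<le> lam i * P i $ j" if "i \<in> {1..m}" for i
        using that rows lam_nonneg Delta_pos[of "P i" j] by simp
    qed simp
    then show ?thesis
      by (simp add: out_dist_def)
  qed
  moreover have "(\<Sum>j\<in>UNIV. out_dist P m lam $ j) = 1"
  proof -
    have "(\<Sum>j\<in>UNIV. out_dist P m lam $ j) = (\<Sum>i\<in>{1..m}. lam i * (\<Sum>j\<in>UNIV. P i $ j))"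
      by (simp add: out_dist_def sum_distrib_left sum.swap[of _ UNIV])
    also have "\<dots> = 1"
      using rows lam_sum by (simp add: Delta_sum)
    finally show ?thesis .
  qed
  ultimately show ?thesis
    by (simp add: Delta_def)
qed

lemma mutual_info_eq_KL_sum:
  assumes rows: "\<forall>i\<in>{1..m}. P i \<in> Delta" and lam: "lam \<in> barDelta m" and Q: "Q \<in> Delta"
  shows "mutual_info P m lam = (\<Sum>i\<in>{1..m}. lam i * KL (P i) Q) - KL (out_dist P m lam) Q"
proof -
  have "mutual_info P m lam = (\<Sum>i\<in>{1..m}. lam i * KL (P i) (out_dist P m lam))"
    by (simp add: mutual_info_def KL_def sum_distrib_left mult.assoc)
  moreover have "(\<Sum>i\<in>{1..m}. lam i * (KL (P i) (out_dist P m lam) - KL (P i) Q))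
      = - KL (out_dist P m lam) Q"
    using rows Q out_dist_in_Delta[OF rows lam] by (intro sum_weighted_KL_diff) (auto simp: out_dist_def)
  ultimately show ?thesis
    by (simp add: right_diff_distrib sum_subtractf)
qed

lemma capacity_eq_of_KL_le:
  assumes rows: "\<forall>i\<in>{1..m}. P i \<in> Delta" and lam: "lam \<in> barDelta m"
    and out: "out_dist P m lam = Q"
    and le: "\<forall>i\<in>{1..m}. KL (P i) Q \<le> C" and eq: "\<forall>i\<in>{1..m}. lam i \<noteq> 0 \<longrightarrow> KL (P i) Q = C"
  shows "capacity P m = C" and "mutual_info P m lam = C"
    and "\<And>lam'. lam' \<in> barDelta m \<Longrightarrow> mutual_info P m lam' = capacity P m \<Longrightarrow> out_dist P m lam' = Q"
proof -
  have Q: "Q \<in> Delta"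
    using out_dist_in_Delta[OF rows lam] out by simp
  have bound: "mutual_info P m lam' \<le> C - KL (out_dist P m lam') Q" if lam': "lam' \<in> barDelta m" for lam'
  proof -
    have "(\<Sum>i\<in>{1..m}. lam' i * KL (P i) Q) \<le> (\<Sum>i\<in>{1..m}. lam' i * C)"
      using lam' le by (intro sum_mono mult_left_mono) (auto simp: barDelta_def)
    also have "\<dots> = C"
      using lam' by (simp add: barDelta_def flip: sum_distrib_right)
    finally show ?thesis
      using mutual_info_eq_KL_sum[OF rows lam' Q] by simp
  qed
  have "(\<Sum>i\<in>{1..m}. lam i * KL (P i) Q) = (\<Sum>i\<in>{1..m}. lam i * C)"
    using eq by (intro sum.cong) auto
  then show MI: "mutual_info P m lam = C"
    using mutual_info_eq_KL_sum[OF rows lam Q] lam out KL_self[OF Q]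
    by (simp add: barDelta_def flip: sum_distrib_right)
  show cap: "capacity P m = C"
    unfolding capacity_def
  proof (rule cSup_eq_maximum)
    show "C \<in> mutual_info P m ` barDelta m"
      using MI lam by force
    show "x \<le> C" if "x \<in> mutual_info P m ` barDelta m" for x
      using that bound KL_nonneg[OF out_dist_in_Delta[OF rows] Q] by fastforce
  qed
  fix lam' assume lam': "lam' \<in> barDelta m" and opt: "mutual_info P m lam' = capacity P m"
  have "KL (out_dist P m lam') Q = 0"
    using bound[OF lam'] opt cap KL_nonneg[OF out_dist_in_Delta[OF rows lam'] Q] by simp
  then show "out_dist P m lam' = Q"
    using KL_eq_0_iff[OF out_dist_in_Delta[OF rows lam'] Q] by simp
qed

lemma is_bary_unique:
  assumes gp: "general_position P m" and "is_bary P m Q \<alpha>" "is_bary P m Q \<beta>" and i: "i \<in> {1..m}"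
  shows "\<alpha> i = \<beta> i"
proof -
  define c where "c k = \<alpha> k - \<beta> k" for k
  have sum_c: "(\<Sum>k\<in>{1..m}. c k) = 0" and comb_c: "(\<Sum>k\<in>{1..m}. c k *\<^sub>R P k) = 0"
    using assms(2,3) by (auto simp: is_bary_def c_def sum_subtractf scaleR_diff_left)
  have split: "{1..m} = insert 1 {2..m}" and "1 \<notin> {2..m}"
    using i by auto
  have "(\<Sum>k\<in>{2..m}. c k *\<^sub>R (P k - P 1)) = (\<Sum>k\<in>{1..m}. c k *\<^sub>R (P k - P 1))"
    unfolding split by simp
  also have "\<dots> = (\<Sum>k\<in>{1..m}. c k *\<^sub>R P k) - (\<Sum>k\<in>{1..m}. c k) *\<^sub>R P 1"
    by (simp add: scaleR_diff_right sum_subtractf scaleR_sum_left)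
  finally have c_rest: "\<forall>k\<in>{2..m}. c k = 0"
    using gp sum_c comb_c unfolding general_position_def by simp
  then have "c 1 = 0"
    using sum_c unfolding split by simp
  then show ?thesis
    using c_rest i by (cases "i = 1") (auto simp: c_def)
qed

lemma general_position_inj:
  assumes gp: "general_position P m" and "i \<in> {1..m}" "k \<in> {1..m}" "P i = P k"
  shows "i = k"
proof -
  have vertex: "is_bary P m (P l) (\<lambda>j. if j = l then 1 else 0)" if "l \<in> {1..m}" for l
    using that by (simp add: is_bary_def if_distrib[of "\<lambda>c. c *\<^sub>R _"] cong: if_cong)
  have "is_bary P m (P i) (\<lambda>j. if j = k then 1 else 0)"
    using vertex[OF assms(3)] assms(4) by simp
  from is_bary_unique[OF gp vertex[OF assms(2)] this assms(2)]
  show ?thesis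
    by (simp split: if_splits)
qed

lemma bary_coeff_zero_outside_affL:
  assumes gp: "general_position P m" and QL: "Q \<in> affL P I" and I: "I \<subseteq> {1..m}"
    and bary: "is_bary P m Q lam" and i: "i \<in> {1..m} - I"
  shows "lam i = 0"
proof -
  obtain a where a: "sum a I = 1" "Q = (\<Sum>k\<in>I. a k *\<^sub>R P k)"
    using QL by (auto simp: affL_def)
  define a' where "a' k = (if k \<in> I then a k else 0)" for k
  have "{1..m} \<inter> I = I"
    using I by blast
  then have "(\<Sum>k\<in>{1..m}. a' k) = sum a I" and "(\<Sum>k\<in>{1..m}. a' k *\<^sub>R P k) = (\<Sum>k\<in>I. a k *\<^sub>R P k)"
    using sum.inter_restrict[of "{1..m}" a I] sum.inter_restrict[of "{1..m}" "\<lambda>k. a k *\<^sub>R P k" I]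
    by (simp_all add: a'_def if_distrib[of "\<lambda>c. c *\<^sub>R _"] cong: if_cong)
  then have "is_bary P m Q a'"
    using a by (simp add: is_bary_def)
  then show ?thesis
    using is_bary_unique[OF gp bary _] i by (force simp: a'_def)
qed

lemma le_at_negative_weight:
  fixes w e :: "'a \<Rightarrow> real"
  assumes I: "finite I" "k \<in> I" and w: "sum w I = 1" "w k < 0" and "0 \<le> \<delta>"
    and others: "\<forall>i\<in>I - {k}. 0 \<le> w i \<and> (w i \<noteq> 0 \<longrightarrow> \<delta> \<le> e i)"
    and total: "(\<Sum>i\<in>I. w i * e i) \<le> 0"
  shows "\<delta> \<le> e k"
proof -
  have "(\<Sum>i\<in>I - {k}. w i * \<delta>) \<le> (\<Sum>i\<in>I - {k}. w i * e i)"
  proof (rule sum_mono)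
    fix i assume "i \<in> I - {k}"
    then show "w i * \<delta> \<le> w i * e i"
      using others by (cases "w i = 0") (auto intro: mult_left_mono)
  qed
  moreover have "(\<Sum>i\<in>I - {k}. w i * \<delta>) = (1 - w k) * \<delta>"
    using w I by (simp add: sum.remove flip: sum_distrib_right)
  moreover have "(\<Sum>i\<in>I. w i * e i) = w k * e k + (\<Sum>i\<in>I - {k}. w i * e i)"
    using I by (simp add: sum.remove)
  ultimately have "w k * (e k - \<delta>) \<le> - \<delta>"
    using total by (simp add: algebra_simps)
  moreover have "0 < w k * (e k - \<delta>)" if "e k < \<delta>"
    using w(2) that by (intro mult_neg_neg) auto
  ultimately show ?thesis
    using \<open>0 \<le> \<delta>\<close> by fastforce
qed

lemma KL_gain_at_negative_weight:
  assumes I: "finite I" "k \<in> I" and X: "\<forall>i\<in>I. X i \<in> Delta" and Q: "Q \<in> Delta" and Q': "Q' \<in> Delta"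
    and w: "sum w I = 1" "Q' = (\<Sum>i\<in>I. w i *\<^sub>R X i)" "w k < 0" and "0 \<le> \<delta>"
    and others: "\<forall>i\<in>I - {k}. 0 \<le> w i \<and> (w i \<noteq> 0 \<longrightarrow> \<delta> \<le> KL (X i) Q' - KL (X i) Q)"
  shows "\<delta> \<le> KL (X k) Q' - KL (X k) Q"
proof -
  have "(\<Sum>i\<in>I. w i * (KL (X i) Q' - KL (X i) Q)) \<le> 0"
    using sum_weighted_KL_diff[OF I(1) X Q Q' w(2)] KL_nonneg[OF Q' Q] by simp
  with le_at_negative_weight[OF I w(1,3) \<open>0 \<le> \<delta>\<close> others] show ?thesis
    by simp
qed

lemma capacity_at_edge_point:
  assumes rows: "\<forall>i\<in>{1..m}. P i \<in> Delta" and k: "k \<in> {1..m}" and l: "l \<in> {1..m}"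
    and "P k \<noteq> P l" and QL: "Q \<in> affL P {k, l}" and eq: "KL (P l) Q = KL (P k) Q"
    and le: "\<forall>i\<in>{1..m}. KL (P i) Q \<le> KL (P k) Q"
  shows "(\<exists>lam\<in>barDelta m. mutual_info P m lam = capacity P m)
       \<and> (\<forall>lam\<in>barDelta m. mutual_info P m lam = capacity P m \<longrightarrow> out_dist P m lam = Q)
       \<and> capacity P m = KL (P k) Q"
proof -
  have "k \<noteq> l"
    using \<open>P k \<noteq> P l\<close> by auto
  obtain b where b: "b k + b l = 1" "Q = b k *\<^sub>R P k + b l *\<^sub>R P l" and Q: "Q \<in> Delta"
    using QL \<open>k \<noteq> l\<close> by (auto simp: affL_def)
  have Pk: "P k \<in> Delta" and Pl: "P l \<in> Delta"
    using rows k l by auto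
  have "0 \<le> b k"
    using b eq \<open>P k \<noteq> P l\<close> by (intro coeff_nonneg_of_KL_le[OF Pk Pl Q]) (simp_all add: eq_diff_eq')
  moreover have "0 \<le> b l"
    using b eq \<open>P k \<noteq> P l\<close> by (intro coeff_nonneg_of_KL_le[OF Pl Pk Q]) (simp_all add: eq_diff_eq')
  moreover define lam where "lam i = (if i = k then b k else 0) + (if i = l then b l else 0)" for i
  ultimately have lam: "lam \<in> barDelta m"
    using b(1) k l by (auto simp: barDelta_def lam_def sum.distrib)
  have out: "out_dist P m lam = Q"
    using b(2) k l
    by (simp add: out_dist_def lam_def scaleR_add_left sum.distrib if_distrib[of "\<lambda>c. c *\<^sub>R _"]
        cong: if_cong)
  have support: "\<forall>i\<in>{1..m}. lam i \<noteq> 0 \<longrightarrow> KL (P i) Q = KL (P k) Q"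
    using eq by (auto simp: lam_def)
  show ?thesis
    using capacity_eq_of_KL_le[OF rows lam out le support] lam by auto
qed

lemma iterated_Iproj_KL_conditions:
  fixes P :: "nat \<Rightarrow> real^'n"
  assumes rows: "\<forall>i\<in>{1..4}. P i \<in> Delta"
    and gp: "general_position P 4"
    and eq0: "is_equidistant P 4 Q0"
    and bary0: "is_bary P 4 Q0 lam0"
    and s0: "lam0 1 < 0" "lam0 2 \<ge> 0" "lam0 3 \<ge> 0" "lam0 4 \<ge> 0"
    and proj1: "is_Iproj (affL P {2,3,4}) Q0 Q1"
    and bary1: "is_bary P 4 Q1 lam1"
    and s1: "lam1 2 < 0" "lam1 3 \<ge> 0" "lam1 4 \<ge> 0"
    and proj2: "is_Iproj (affL P {3,4}) Q1 Q2"
  shows "KL (P 4) Q2 = KL (P 3) Q2" and "\<forall>i\<in>{1..4}. KL (P i) Q2 \<le> KL (P 3) Q2"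
proof -
  have four: "{1..4::nat} = {1, 2, 3, 4}"
    by auto
  have Q0L: "Q0 \<in> affL P {1..4}" and equi_all: "\<forall>i\<in>{1..4}. \<forall>k\<in>{1..4}. KL (P i) Q0 = KL (P k) Q0"
    using eq0 unfolding is_equidistant_def by blast+
  have equi: "KL (P i) Q0 = KL (P 3) Q0" if "i \<in> {1..4}" for i
    using bspec[OF bspec[OF equi_all that], of 3] by simp
  have Q1L: "Q1 \<in> affL P {2,3,4}"
    using proj1 by (simp add: is_Iproj_def)
  have Q0: "Q0 \<in> Delta" and Q1: "Q1 \<in> Delta" and Q2: "Q2 \<in> Delta"
    using Q0L Q1L proj2 by (simp_all add: is_Iproj_def affL_def)
  have pyth1: "KL (P i) Q0 = KL (P i) Q1 + KL Q1 Q0" if "i \<in> {2,3,4}" for i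
    using that rows by (intro Iproj_pythagorean[OF proj1 Q0]) auto
  have pyth2: "KL (P i) Q1 = KL (P i) Q2 + KL Q2 Q1" if "i \<in> {3,4}" for i
    using that rows by (intro Iproj_pythagorean[OF proj2 Q1]) auto
  have "lam1 1 = 0"
    by (rule bary_coeff_zero_outside_affL[OF gp Q1L _ bary1]) auto
  then have "\<forall>i\<in>{1..4} - {2}. 0 \<le> lam1 i \<and> (lam1 i \<noteq> 0 \<longrightarrow> KL Q2 Q1 \<le> KL (P i) Q1 - KL (P i) Q2)"
    using s1 pyth2 unfolding four by (simp add: insert_Diff_if)
  from KL_gain_at_negative_weight[OF _ _ rows Q2 Q1 bary1[unfolded is_bary_def, THEN conjunct1]
      bary1[unfolded is_bary_def, THEN conjunct2] s1(1) KL_nonneg[OF Q2 Q1] this]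
  have gain2: "KL Q2 Q1 \<le> KL (P 2) Q1 - KL (P 2) Q2"
    by simp
  have "\<forall>i\<in>{1..4} - {1}. 0 \<le> lam0 i \<and>
      (lam0 i \<noteq> 0 \<longrightarrow> KL Q1 Q0 + KL Q2 Q1 \<le> KL (P i) Q0 - KL (P i) Q2)"
    using s0 pyth1 pyth2 gain2 unfolding four by (simp add: insert_Diff_if)
  from KL_gain_at_negative_weight[OF _ _ rows Q2 Q0 bary0[unfolded is_bary_def, THEN conjunct1]
      bary0[unfolded is_bary_def, THEN conjunct2] s0(1) _ this]
  have gain1: "KL Q1 Q0 + KL Q2 Q1 \<le> KL (P 1) Q0 - KL (P 1) Q2"
    using KL_nonneg[OF Q1 Q0] KL_nonneg[OF Q2 Q1] by simp
  show "KL (P 4) Q2 = KL (P 3) Q2"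
    using equi[of 4] pyth1[of 3] pyth1[of 4] pyth2[of 3] pyth2[of 4] by simp
  moreover have "KL (P 2) Q2 \<le> KL (P 3) Q2"
    using equi[of 2] pyth1[of 2] pyth1[of 3] pyth2[of 3] gain2 by simp
  moreover have "KL (P 1) Q2 \<le> KL (P 3) Q2"
    using equi[of 1] pyth1[of 3] pyth2[of 3] gain1 by simp
  ultimately show "\<forall>i\<in>{1..4}. KL (P i) Q2 \<le> KL (P 3) Q2"
    unfolding four by simp
qed

theorem theorem19:
  fixes P :: "nat \<Rightarrow> real^'n" and Q0 Q1 Q2 :: "real^'n" and lam0 lam1 :: "nat \<Rightarrow> real"
  assumes rows: "\<forall>i\<in>{1..4}. P i \<in> Delta"
    and gp: "general_position P 4"
    and eq0: "is_equidistant P 4 Q0"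
    and bary0: "is_bary P 4 Q0 lam0"
    and s0: "lam0 1 < 0" "lam0 2 \<ge> 0" "lam0 3 \<ge> 0" "lam0 4 \<ge> 0"
    and proj1: "is_Iproj (affL P {2,3,4}) Q0 Q1"
    and bary1: "is_bary P 4 Q1 lam1"
    and s1: "lam1 2 < 0" "lam1 3 \<ge> 0" "lam1 4 \<ge> 0"
    and proj2: "is_Iproj (affL P {3,4}) Q1 Q2"
  shows "(\<exists>lam\<in>barDelta 4. mutual_info P 4 lam = capacity P 4)
       \<and> (\<forall>lam\<in>barDelta 4. mutual_info P 4 lam = capacity P 4 \<longrightarrow> out_dist P 4 lam = Q2)
       \<and> capacity P 4 = KL (P 3) Q2"
proof -
  note KT = iterated_Iproj_KL_conditions[OF assms]
  have "Q2 \<in> affL P {3,4}"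
    using proj2 by (simp add: is_Iproj_def)
  moreover have "P 3 \<noteq> P 4"
    using general_position_inj[OF gp, of 3 4] by auto
  ultimately show ?thesis
    by (intro capacity_at_edge_point[OF rows _ _ _ _ KT]) simp_all
qed

end
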